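(* Let $M$ be a tame paving matroid of rank $n$ on $[d]$ and let $\mathcal{Q}=\{Q_1,\ldots,Q_k\}$ be a partition of its set of dependent hyperplanes. Then $M(\mathcal{Q})\ge M$, i.e., every dependent set of $M$ is dependent in $M(\mathcal{Q})$.
   Context: A matroid of rank $n$ is paving if every circuit has size $n$ or $n+1$; a dependent hyperplane is a maximal subset of size at least $n$ all of whose $n$-element subsets are circuits; a paving matroid is tame if any three distinct dependent hyperplanes have empty intersection. Quasi-paving construction: for $n\le d$ and a collection $\mathcal{H}$ of subsets of $[d]$ any three of which have empty intersection, the matroid on $[d]$ whose circuits are (Type 1) the $(n-1)$-subsets contained in the intersection of two distinct members of $\mathcal{H}$, (Type 2) the $n$-subsets of a member of $\mathcal{H}$ containing no Type 1 set, (Type 3) the $(n+1)$-subsets containing no Type 1 or Type 2 set. For a partition $\mathcal{Q}=\{Q_1,\ldots,Q_k\}$ of the dependent hyperplanes of $M$, set $H_i=\bigcup_{l\in Q_i}l$ and let $M(\mathcal{Q})$ be the matroid obtained from the quasi-paving construction applied to $\mathcal{H}=\{H_1,\ldots,H_k\}$ and the integer $n$ (each element lies in at most two $H_i$ since $M$ is tame). *)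

theory Defs
  imports Main "HOL-Library.Disjoint_Sets"
begin

definition matroid_circuits :: "'a set \<Rightarrow> 'a set set \<Rightarrow> bool" where
  "matroid_circuits E C \<longleftrightarrow> finite E \<and>
     (\<forall>X\<in>C. X \<subseteq> E) \<and> {} \<notin> C \<and>
     (\<forall>X\<in>C. \<forall>Y\<in>C. X \<subseteq> Y \<longrightarrow> X = Y) \<and>
     (\<forall>X\<in>C. \<forall>Y\<in>C. \<forall>e. X \<noteq> Y \<and> e \<in> X \<inter> Y \<longrightarrow>
        (\<exists>Z\<in>C. Z \<subseteq> (X \<union> Y) - {e}))"

definition indep :: "'a set \<Rightarrow> 'a set set \<Rightarrow> 'a set \<Rightarrow> bool" where
  "indep E C X \<longleftrightarrow> X \<subseteq> E \<and> (\<forall>Z\<in>C. \<not> Z \<subseteq> X)"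

definition dependent :: "'a set \<Rightarrow> 'a set set \<Rightarrow> 'a set \<Rightarrow> bool" where
  "dependent E C X \<longleftrightarrow> X \<subseteq> E \<and> \<not> indep E C X"

definition has_rank :: "'a set \<Rightarrow> 'a set set \<Rightarrow> nat \<Rightarrow> bool" where
  "has_rank E C n \<longleftrightarrow> (\<exists>X. indep E C X \<and> card X = n) \<and>
     (\<forall>X. indep E C X \<longrightarrow> card X \<le> n)"

definition paving :: "'a set \<Rightarrow> 'a set set \<Rightarrow> nat \<Rightarrow> bool" where
  "paving E C n \<longleftrightarrow> matroid_circuits E C \<and> has_rank E C n \<and>
     (\<forall>X\<in>C. card X = n \<or> card X = n + 1)"

definition hyp_cand :: "'a set \<Rightarrow> 'a set set \<Rightarrow> nat \<Rightarrow> 'a set \<Rightarrow> bool" where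
  "hyp_cand E C n H \<longleftrightarrow> H \<subseteq> E \<and> n \<le> card H \<and>
     (\<forall>S. S \<subseteq> H \<and> card S = n \<longrightarrow> S \<in> C)"

definition dep_hyperplane :: "'a set \<Rightarrow> 'a set set \<Rightarrow> nat \<Rightarrow> 'a set \<Rightarrow> bool" where
  "dep_hyperplane E C n H \<longleftrightarrow> hyp_cand E C n H \<and>
     (\<forall>H'. hyp_cand E C n H' \<and> H \<subseteq> H' \<longrightarrow> H' = H)"

definition tame :: "'a set \<Rightarrow> 'a set set \<Rightarrow> nat \<Rightarrow> bool" where
  "tame E C n \<longleftrightarrow> paving E C n \<and>
     (\<forall>H1 H2 H3. dep_hyperplane E C n H1 \<and> dep_hyperplane E C n H2 \<and>
        dep_hyperplane E C n H3 \<and> H1 \<noteq> H2 \<and> H1 \<noteq> H3 \<and> H2 \<noteq> H3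
        \<longrightarrow> H1 \<inter> H2 \<inter> H3 = {})"

text \<open>Quasi-paving construction on [d] = {1..d}, for a collection of sets
  given as an indexed family Hf over the index set I.
  "card S + 1 = n" encodes |S| = n - 1 (integer subtraction).\<close>
definition qp_type1 :: "nat \<Rightarrow> nat \<Rightarrow> 'i set \<Rightarrow> ('i \<Rightarrow> nat set) \<Rightarrow> nat set \<Rightarrow> bool" where
  "qp_type1 d n I Hf S \<longleftrightarrow> S \<subseteq> {1..d} \<and> card S + 1 = n \<and>
     (\<exists>i\<in>I. \<exists>j\<in>I. i \<noteq> j \<and> S \<subseteq> Hf i \<inter> Hf j)"

definition qp_type2 :: "nat \<Rightarrow> nat \<Rightarrow> 'i set \<Rightarrow> ('i \<Rightarrow> nat set) \<Rightarrow> nat set \<Rightarrow> bool" where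
  "qp_type2 d n I Hf S \<longleftrightarrow> S \<subseteq> {1..d} \<and> card S = n \<and>
     (\<exists>i\<in>I. S \<subseteq> Hf i) \<and> (\<forall>T. T \<subseteq> S \<longrightarrow> \<not> qp_type1 d n I Hf T)"

definition qp_type3 :: "nat \<Rightarrow> nat \<Rightarrow> 'i set \<Rightarrow> ('i \<Rightarrow> nat set) \<Rightarrow> nat set \<Rightarrow> bool" where
  "qp_type3 d n I Hf S \<longleftrightarrow> S \<subseteq> {1..d} \<and> card S = n + 1 \<and>
     (\<forall>T. T \<subseteq> S \<longrightarrow> \<not> qp_type1 d n I Hf T \<and> \<not> qp_type2 d n I Hf T)"

definition qp_circuits :: "nat \<Rightarrow> nat \<Rightarrow> 'i set \<Rightarrow> ('i \<Rightarrow> nat set) \<Rightarrow> nat set set" where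
  "qp_circuits d n I Hf =
     {S. qp_type1 d n I Hf S \<or> qp_type2 d n I Hf S \<or> qp_type3 d n I Hf S}"

definition MQ_circuits :: "nat \<Rightarrow> nat \<Rightarrow> nat set set set \<Rightarrow> nat set set" where
  "MQ_circuits d n Q = qp_circuits d n Q (\<lambda>q. \<Union>q)"

end

theory Submission
  imports Defs
begin

text \<open>Every circuit Z of M has n or n + 1 elements. If Z contains a Type 1 or Type 2 set of
  M(Q) it is dependent there. Otherwise, if |Z| = n + 1 then Z is itself of Type 3; and if
  |Z| = n then Z lies in a dependent hyperplane of M, hence in the union H_i of its block of Q,
  so Z is of Type 2.\<close>

lemma dependent_iff_contains_circuit:
  "dependent E C X \<longleftrightarrow> X \<subseteq> E \<and> (\<exists>Z\<in>C. Z \<subseteq> X)"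
  by (auto simp: dependent_def indep_def)

lemma hyp_cand_circuit:
  assumes "finite E" "Z \<in> C" "Z \<subseteq> E" "card Z = n"
  shows "hyp_cand E C n Z"
proof -
  have "S = Z" if "S \<subseteq> Z" "card S = n" for S
    using that assms(4) card_subset_eq[of Z S] finite_subset[OF assms(3,1)] by simp
  then show ?thesis
    using assms by (auto simp: hyp_cand_def)
qed

lemma circuit_subset_dep_hyperplane:
  assumes "finite E" "Z \<in> C" "Z \<subseteq> E" "card Z = n"
  shows "\<exists>H. dep_hyperplane E C n H \<and> Z \<subseteq> H"
proof -
  let ?A = "{H. hyp_cand E C n H \<and> Z \<subseteq> H}"
  have "?A \<subseteq> Pow E"
    by (auto simp: hyp_cand_def)
  then have "finite ?A"
    using \<open>finite E\<close> by (meson finite_Pow_iff finite_subset)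
  moreover have "?A \<noteq> {}"
    using hyp_cand_circuit[OF assms] by blast
  ultimately obtain H where "H \<in> ?A" and "\<forall>H'\<in>?A. H \<subseteq> H' \<longrightarrow> H = H'"
    by (meson finite_has_maximal)
  then have "dep_hyperplane E C n H"
    unfolding dep_hyperplane_def by (metis (mono_tags, lifting) mem_Collect_eq order_trans)
  with \<open>H \<in> ?A\<close> show ?thesis
    by blast
qed

lemma qp_circuit_subset:
  assumes "S \<subseteq> {1..d}"
    and "card S = n + 1 \<or> (card S = n \<and> (\<exists>i\<in>I. S \<subseteq> Hf i))"
  shows "\<exists>W\<in>qp_circuits d n I Hf. W \<subseteq> S"
proof (cases "\<exists>T\<subseteq>S. qp_type1 d n I Hf T")
  case True
  then show ?thesis
    by (auto simp: qp_circuits_def)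
next
  case no_type1: False
  from assms(2) show ?thesis
  proof
    assume "card S = n + 1"
    show ?thesis
    proof (cases "\<exists>T\<subseteq>S. qp_type2 d n I Hf T")
      case True
      then show ?thesis
        by (auto simp: qp_circuits_def)
    next
      case False
      with no_type1 \<open>card S = n + 1\<close> assms(1) have "qp_type3 d n I Hf S"
        unfolding qp_type3_def by blast
      then show ?thesis
        by (auto simp: qp_circuits_def)
    qed
  next
    assume "card S = n \<and> (\<exists>i\<in>I. S \<subseteq> Hf i)"
    with no_type1 assms(1) have "qp_type2 d n I Hf S"
      unfolding qp_type2_def by blast
    then show ?thesis
      by (auto simp: qp_circuits_def)
  qed
qed

theorem lemma4p3:
  fixes d n :: nat and C :: "nat set set" and Q :: "nat set set set"
  assumes "tame {1..d} C n"
    and "partition_on {H. dep_hyperplane {1..d} C n H} Q"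
  shows "\<forall>X. dependent {1..d} C X \<longrightarrow> dependent {1..d} (MQ_circuits d n Q) X"
proof (intro allI impI)
  fix X assume "dependent {1..d} C X"
  then obtain Z where X: "X \<subseteq> {1..d}" and Z: "Z \<in> C" "Z \<subseteq> X"
    by (auto simp: dependent_iff_contains_circuit)
  have Z_card: "card Z = n \<or> card Z = n + 1"
    using assms(1) Z by (simp add: tame_def paving_def)
  have Z_in_block: "\<exists>q\<in>Q. Z \<subseteq> \<Union>q" if Z_n: "card Z = n"
  proof -
    obtain H where "dep_hyperplane {1..d} C n H" "Z \<subseteq> H"
      using circuit_subset_dep_hyperplane[of "{1..d}" Z C n] Z X Z_n
      by (meson finite_atLeastAtMost order_trans)
    moreover from this(1) assms(2) obtain q where "q \<in> Q" "H \<in> q"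
      by (auto simp: partition_on_def)
    ultimately show ?thesis
      by blast
  qed
  have "\<exists>W\<in>MQ_circuits d n Q. W \<subseteq> Z"
    unfolding MQ_circuits_def
    using qp_circuit_subset[of Z d n Q] Z_card Z_in_block Z X by blast
  with X Z(2) show "dependent {1..d} (MQ_circuits d n Q) X"
    by (auto simp: dependent_iff_contains_circuit)
qed

end
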